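(* Let $S\subset\mathbb{Z}^d$ be finite and even, and let $\{\mathcal{S}_u\}_{u\in\partial_\bullet S}$ be subsets of $\mathcal{S}$. Let $\mathcal{F}\subset\mathcal{S}^S$ be such that $f(u)\in\mathcal{S}_u$ for every $f\in\mathcal{F}$ and $u\in\partial_\bullet S$. Let $f$ be a random element of $\mathcal{F}$ chosen with probability proportional to $\omega_f$. For each odd vertex $v\in S$, let $X_v$ be a random variable measurable with respect to $f|_{N(v)}$. Then \[ \omega(\mathcal{F})\le\prod_{v\in S\text{ odd}}\ \prod_x\left[\frac{Z(\Psi_{v,x},I_{v,x})}{\mathbb{P}(X_v=x)}\right]^{\frac{1}{2d}\mathbb{P}(X_v=x)}\cdot\prod_{u\in\partial_\bullet S}(\lambda_{\mathcal{S}_u})^{\frac{1}{2d}|\partial u\cap\partial S|}, \] where the inner product is over $x$ in the support of $X_v$, and $\Psi_{v,x}$ and $I_{v,x}$ are the supports of $f|_{N(v)}$ and of $f(v)$, respectively, on the event $\{X_v=x\}$.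
   Context: A spin system: finite set $\mathcal{S}$, activities $\lambda_i>0$, symmetric pair interactions $\lambda_{i,j}\ge0$. For $f:S\to\mathcal{S}$, $\omega_f=\prod_{v\in S}\lambda_{f(v)}\prod_{\{u,v\}\in E(S)}\lambda_{f(u),f(v)}$ where $E(S)$ is the set of nearest-neighbour edges of $\mathbb{Z}^d$ with both endpoints in $S$; $\omega(\mathcal{F})=\sum_{f\in\mathcal{F}}\omega_f$; $\lambda_I=\sum_{i\in I}\lambda_i$. A vertex is even/odd according to the parity of its coordinate sum. $N(v)$ is the set of $2d$ neighbours of $v$; $\partial_\bullet S$ is the set of vertices of $S$ with a neighbour outside $S$; $S$ is even if $\partial_\bullet S$ consists of even vertices (so $N(v)\subset S$ for odd $v\in S$). $\partial u$ is the set of edges incident to $u$ and $\partial S$ the set of edges with exactly one endpoint in $S$. For a set $\Psi$ of functions $\psi:N(v)\to\mathcal{S}$ and $I\subset\mathcal{S}$, $Z(\Psi,I)=\sum_{\psi\in\Psi}\big(\prod_{u\in N(v)}\lambda_{\psi(u)}\big)\big(\sum_{i\in I}\lambda_i\prod_{u\in N(v)}\lambda_{i,\psi(u)}\big)^{2d}$. *)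

theory Defs
  imports "HOL-Analysis.Analysis"
begin

(* Vertices of Z^d are modelled as int ^ 'd, with d = CARD('d).
  Spins form a finite type 's.  Configurations on S are extensional functions
  (elements of S ->E UNIV). *)

type_synonym 'd vertex = "int ^ 'd"

definition nbrs :: "'d::finite vertex \<Rightarrow> 'd vertex set" where
  "nbrs v = {w. \<exists>i. w = v + axis i 1 \<or> w = v - axis i 1}"

definition adj :: "'d::finite vertex \<Rightarrow> 'd vertex \<Rightarrow> bool" where
  "adj u v \<longleftrightarrow> v \<in> nbrs u"

definition even_vertex :: "'d::finite vertex \<Rightarrow> bool" where
  "even_vertex v \<longleftrightarrow> even (\<Sum>i\<in>UNIV. v $ i)"

definition odd_vertex :: "'d::finite vertex \<Rightarrow> bool" where
  "odd_vertex v \<longleftrightarrow> odd (\<Sum>i\<in>UNIV. v $ i)"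

definition edges_in :: "'d::finite vertex set \<Rightarrow> 'd vertex set set" where
  "edges_in S = {{u, v} | u v. u \<in> S \<and> v \<in> S \<and> adj u v}"

definition inner_boundary :: "'d::finite vertex set \<Rightarrow> 'd vertex set" where
  "inner_boundary S = {v \<in> S. \<exists>w \<in> nbrs v. w \<notin> S}"

definition even_set :: "'d::finite vertex set \<Rightarrow> bool" where
  "even_set S \<longleftrightarrow> (\<forall>v \<in> inner_boundary S. even_vertex v)"

definition incident_edges :: "'d::finite vertex \<Rightarrow> 'd vertex set set" where
  "incident_edges u = {{u, w} | w. adj u w}"

definition edge_boundary :: "'d::finite vertex set \<Rightarrow> 'd vertex set set" where
  "edge_boundary S = {{u, w} | u w. adj u w \<and> u \<in> S \<and> w \<notin> S}"

definition spin_system :: "('s::finite \<Rightarrow> real) \<Rightarrow> ('s \<Rightarrow> 's \<Rightarrow> real) \<Rightarrow> bool" where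
  "spin_system lam lam2 \<longleftrightarrow> (\<forall>i. lam i > 0) \<and> (\<forall>i j. lam2 i j \<ge> 0)
      \<and> (\<forall>i j. lam2 i j = lam2 j i)"

(* Interaction weight of an (unordered) edge; well defined by symmetry of lam2. *)
definition edge_weight ::
  "('s \<Rightarrow> 's \<Rightarrow> real) \<Rightarrow> ('v \<Rightarrow> 's) \<Rightarrow> 'v set \<Rightarrow> real" where
  "edge_weight lam2 f e = (let p = (SOME p. e = {fst p, snd p}) in lam2 (f (fst p)) (f (snd p)))"

definition weight ::
  "('s \<Rightarrow> real) \<Rightarrow> ('s \<Rightarrow> 's \<Rightarrow> real) \<Rightarrow> 'd::finite vertex set \<Rightarrow> ('d vertex \<Rightarrow> 's) \<Rightarrow> real" where
  "weight lam lam2 S f = (\<Prod>v\<in>S. lam (f v)) * (\<Prod>e\<in>edges_in S. edge_weight lam2 f e)"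

definition total_weight ::
  "('s \<Rightarrow> real) \<Rightarrow> ('s \<Rightarrow> 's \<Rightarrow> real) \<Rightarrow> 'd::finite vertex set \<Rightarrow> ('d vertex \<Rightarrow> 's) set \<Rightarrow> real" where
  "total_weight lam lam2 S F = (\<Sum>f\<in>F. weight lam lam2 S f)"

definition lam_set :: "('s \<Rightarrow> real) \<Rightarrow> 's set \<Rightarrow> real" where
  "lam_set lam I = (\<Sum>i\<in>I. lam i)"

definition Zfun ::
  "('s \<Rightarrow> real) \<Rightarrow> ('s \<Rightarrow> 's \<Rightarrow> real) \<Rightarrow> 'd::finite vertex \<Rightarrow> ('d vertex \<Rightarrow> 's) set \<Rightarrow> 's set \<Rightarrow> real" where
  "Zfun lam lam2 v Psi I =
     (\<Sum>\<psi>\<in>Psi. (\<Prod>u\<in>nbrs v. lam (\<psi> u)) *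
        (\<Sum>i\<in>I. lam i * (\<Prod>u\<in>nbrs v. lam2 i (\<psi> u))) ^ (2 * CARD('d)))"

definition prob_X ::
  "('s \<Rightarrow> real) \<Rightarrow> ('s \<Rightarrow> 's \<Rightarrow> real) \<Rightarrow> 'd::finite vertex set \<Rightarrow> ('d vertex \<Rightarrow> 's) set
    \<Rightarrow> (('d vertex \<Rightarrow> 's) \<Rightarrow> 'x) \<Rightarrow> 'x \<Rightarrow> real" where
  "prob_X lam lam2 S F X x =
     (\<Sum>f\<in>{f\<in>F. X f = x}. weight lam lam2 S f) / total_weight lam lam2 S F"

definition supp_X ::
  "('s \<Rightarrow> real) \<Rightarrow> ('s \<Rightarrow> 's \<Rightarrow> real) \<Rightarrow> 'd::finite vertex set \<Rightarrow> ('d vertex \<Rightarrow> 's) set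
    \<Rightarrow> (('d vertex \<Rightarrow> 's) \<Rightarrow> 'x) \<Rightarrow> 'x set" where
  "supp_X lam lam2 S F X = {x. prob_X lam lam2 S F X x > 0}"

definition Psi_set ::
  "('s \<Rightarrow> real) \<Rightarrow> ('s \<Rightarrow> 's \<Rightarrow> real) \<Rightarrow> 'd::finite vertex set \<Rightarrow> ('d vertex \<Rightarrow> 's) set
    \<Rightarrow> (('d vertex \<Rightarrow> 's) \<Rightarrow> 'x) \<Rightarrow> 'd vertex \<Rightarrow> 'x \<Rightarrow> ('d vertex \<Rightarrow> 's) set" where
  "Psi_set lam lam2 S F X v x =
     {restrict f (nbrs v) | f. f \<in> F \<and> weight lam lam2 S f > 0 \<and> X f = x}"

definition I_set ::
  "('s \<Rightarrow> real) \<Rightarrow> ('s \<Rightarrow> 's \<Rightarrow> real) \<Rightarrow> 'd::finite vertex set \<Rightarrow> ('d vertex \<Rightarrow> 's) set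
    \<Rightarrow> (('d vertex \<Rightarrow> 's) \<Rightarrow> 'x) \<Rightarrow> 'd vertex \<Rightarrow> 'x \<Rightarrow> 's set" where
  "I_set lam lam2 S F X v x =
     {f v | f. f \<in> F \<and> weight lam lam2 S f > 0 \<and> X f = x}"

end

(* Let f be drawn from F with probability proportional to its weight and let H denote Shannon
   entropy, so that log \<omega>(F) = H(f) + E log \<omega>_f.  As S is even, \<omega>_f factorises into the
   activities of the even sites and, for every odd site v, the weight of f(v) against its 2d
   neighbours, all of which lie in S.  Submodularity of entropy bounds H(f) by the entropy of f on
   the even sites plus the conditional entropies H(f(v) | f on N(v)).  Shearer's inequality for
   the fractional cover of the even sites by the neighbourhoods N(v) of odd sites (weight 1/2d) and
   the boundary singletons (weight |\<partial>u \<inter> \<partial>S|/2d) splits the even part into local terms.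
   Gibbs' inequality then bounds each boundary term by log \<lambda>(S_u) and, applied twice (to f(v)
   given f on N(v), and to f on N(v) given X_v), each odd-site term by the logarithm of the
   corresponding factor Z(\<Psi>, I) / P(X_v = x). *)

theory Submission
  imports Defs
begin

lemma restrict_eq_restrict_iff: "restrict f A = restrict g A \<longleftrightarrow> (\<forall>x\<in>A. f x = g x)"
  by (auto simp: fun_eq_iff restrict_def)

lemma prod_powr_eq_exp_sum:
  fixes b e :: "'i \<Rightarrow> real"
  assumes "\<And>i. i \<in> I \<Longrightarrow> b i > 0"
  shows "(\<Prod>i\<in>I. b i powr e i) = exp (\<Sum>i\<in>I. e i * ln (b i))"
proof (cases "finite I")
  case True
  then show ?thesis
    using assms by (simp add: exp_sum powr_def mult.commute less_imp_neq[symmetric] cong: prod.cong)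
qed simp

section \<open>Entropy of finite distributions\<close>

locale finite_distribution =
  fixes Om :: "'w set" and p :: "'w \<Rightarrow> real"
  assumes finite_Om: "finite Om"
    and p_pos: "\<And>w. w \<in> Om \<Longrightarrow> p w > 0"
    and sum_p: "sum p Om = 1"
begin

definition law :: "('w \<Rightarrow> 'b) \<Rightarrow> 'b \<Rightarrow> real" where
  "law g y = sum p {w\<in>Om. g w = y}"

definition expect :: "('w \<Rightarrow> real) \<Rightarrow> real" where
  "expect \<phi> = (\<Sum>w\<in>Om. p w * \<phi> w)"

definition entropy :: "('w \<Rightarrow> 'b) \<Rightarrow> real" where
  "entropy g = - expect (\<lambda>w. ln (law g (g w)))"

lemma law_pos: "w \<in> Om \<Longrightarrow> law g (g w) > 0"
  unfolding law_def using finite_Om p_pos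
  by (intro sum_pos2[of _ w]) (auto intro: less_imp_le)

lemma law_nonneg: "law g y \<ge> 0"
  unfolding law_def using p_pos by (intro sum_nonneg) (auto intro: less_imp_le)

lemma law_pos_iff: "law g y > 0 \<longleftrightarrow> y \<in> g ` Om"
proof
  assume "law g y > 0"
  then have "{w\<in>Om. g w = y} \<noteq> {}" unfolding law_def by (metis less_irrefl sum.empty)
  then show "y \<in> g ` Om" by auto
qed (use law_pos in auto)

lemma expect_const [simp]: "expect (\<lambda>w. c) = c"
  unfolding expect_def by (simp add: sum_distrib_right[symmetric] sum_p)

lemma expect_add: "expect (\<lambda>w. \<phi> w + \<psi> w) = expect \<phi> + expect \<psi>"
  unfolding expect_def by (simp add: distrib_left sum.distrib)

lemma expect_diff: "expect (\<lambda>w. \<phi> w - \<psi> w) = expect \<phi> - expect \<psi>"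
  unfolding expect_def by (simp add: right_diff_distrib sum_subtractf)

lemma expect_scale: "expect (\<lambda>w. c * \<phi> w) = c * expect \<phi>"
  unfolding expect_def by (simp add: sum_distrib_left mult.left_commute)

lemma expect_sum: "expect (\<lambda>w. \<Sum>i\<in>I. \<phi> i w) = (\<Sum>i\<in>I. expect (\<phi> i))"
  unfolding expect_def by (simp add: sum_distrib_left sum.swap[of _ Om])

lemma expect_cong: "(\<And>w. w \<in> Om \<Longrightarrow> \<phi> w = \<psi> w) \<Longrightarrow> expect \<phi> = expect \<psi>"
  unfolding expect_def by simp

lemma expect_mono: "(\<And>w. w \<in> Om \<Longrightarrow> \<phi> w \<le> \<psi> w) \<Longrightarrow> expect \<phi> \<le> expect \<psi>"
  unfolding expect_def using p_pos by (intro sum_mono mult_left_mono) (auto intro: less_imp_le)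

lemma expect_comp: "expect (\<lambda>w. \<phi> (g w)) = (\<Sum>y\<in>g ` Om. law g y * \<phi> y)"
proof -
  have "expect (\<lambda>w. \<phi> (g w)) = (\<Sum>y\<in>g ` Om. \<Sum>w\<in>{w\<in>Om. g w = y}. p w * \<phi> (g w))"
    unfolding expect_def by (rule sum.image_gen[OF finite_Om])
  also have "\<dots> = (\<Sum>y\<in>g ` Om. law g y * \<phi> y)"
    unfolding law_def by (simp add: sum_distrib_right)
  finally show ?thesis .
qed

lemma sum_law: "(\<Sum>y\<in>g ` Om. law g y) = 1"
  using expect_comp[of "\<lambda>_. 1" g] by simp

lemma entropy_eq_sum_law: "entropy g = - (\<Sum>y\<in>g ` Om. law g y * ln (law g y))"
  unfolding entropy_def expect_comp[of "\<lambda>y. ln (law g y)"] ..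

lemma sum_over_level_sets:
  assumes B: "B \<subseteq> Om" and saturated: "\<And>w w'. w \<in> B \<Longrightarrow> w' \<in> Om \<Longrightarrow> g w' = g w \<Longrightarrow> w' \<in> B"
  shows "(\<Sum>w\<in>B. p w * \<phi> (g w) / law g (g w)) = (\<Sum>y\<in>g ` B. \<phi> y)"
proof -
  have "finite B" using B finite_Om finite_subset by blast
  then have "(\<Sum>w\<in>B. p w * \<phi> (g w) / law g (g w)) =
        (\<Sum>y\<in>g ` B. \<Sum>w\<in>{w\<in>B. g w = y}. p w * \<phi> (g w) / law g (g w))"
    by (rule sum.image_gen)
  also have "\<dots> = (\<Sum>y\<in>g ` B. \<phi> y)"
  proof (rule sum.cong[OF refl])
    fix y assume "y \<in> g ` B"
    then obtain w0 where w0: "w0 \<in> B" "y = g w0" by auto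
    have level: "{w\<in>B. g w = y} = {w\<in>Om. g w = y}"
      using B saturated[OF w0(1)] w0(2) by blast
    have "law g y > 0" using law_pos[of w0 g] B w0 by auto
    then show "(\<Sum>w\<in>{w\<in>B. g w = y}. p w * \<phi> (g w) / law g (g w)) = \<phi> y"
      unfolding level by (simp add: sum_divide_distrib[symmetric] sum_distrib_right[symmetric] law_def)
  qed
  finally show ?thesis .
qed

lemma sum_law_fibre:
  assumes coarser: "\<And>w w'. w \<in> Om \<Longrightarrow> w' \<in> Om \<Longrightarrow> g w = g w' \<Longrightarrow> c w = c w'"
  shows "(\<Sum>y\<in>g ` {w'\<in>Om. c w' = z}. law g y) = law c z"
proof -
  have "(\<Sum>y\<in>g ` {w'\<in>Om. c w' = z}. law g y)
      = (\<Sum>w\<in>{w'\<in>Om. c w' = z}. p w * law g (g w) / law g (g w))"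
    by (rule sum_over_level_sets[symmetric]) (auto dest: coarser)
  also have "\<dots> = law c z"
    unfolding law_def[of c] using law_pos[of _ g] by (intro sum.cong) force+
  finally show ?thesis .
qed

lemma expect_ratio_law:
  assumes coarser: "\<And>w w'. w \<in> Om \<Longrightarrow> w' \<in> Om \<Longrightarrow> g w = g w' \<Longrightarrow> c w = c w'"
  shows "expect (\<lambda>w. \<psi> (c w) * \<phi> (g w) / law g (g w))
    = (\<Sum>z\<in>c ` Om. \<psi> z * (\<Sum>y\<in>g ` {w\<in>Om. c w = z}. \<phi> y))"
proof -
  have "expect (\<lambda>w. \<psi> (c w) * \<phi> (g w) / law g (g w))
      = (\<Sum>z\<in>c ` Om. \<Sum>w\<in>{w\<in>Om. c w = z}. p w * (\<psi> (c w) * \<phi> (g w) / law g (g w)))"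
    unfolding expect_def by (rule sum.image_gen[OF finite_Om])
  also have "\<dots> = (\<Sum>z\<in>c ` Om. \<psi> z * (\<Sum>w\<in>{w\<in>Om. c w = z}. p w * \<phi> (g w) / law g (g w)))"
    unfolding sum_distrib_left by (intro sum.cong refl) (auto simp: mult_ac)
  also have "\<dots> = (\<Sum>z\<in>c ` Om. \<psi> z * (\<Sum>y\<in>g ` {w\<in>Om. c w = z}. \<phi> y))"
    by (intro sum.cong refl arg_cong[where f = "(*) _"] sum_over_level_sets) (auto dest: coarser)
  finally show ?thesis .
qed

lemma entropy_cong:
  assumes "\<And>w w'. w \<in> Om \<Longrightarrow> w' \<in> Om \<Longrightarrow> g w = g w' \<longleftrightarrow> g' w = g' w'"
  shows "entropy g = entropy g'"
proof -
  have "law g (g w) = law g' (g' w)" if "w \<in> Om" for w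
    unfolding law_def using assms that by (metis (no_types, lifting))
  then show ?thesis unfolding entropy_def by (simp cong: expect_cong)
qed

lemma entropy_const [simp]: "entropy (\<lambda>w. c) = 0"
  unfolding entropy_def law_def by (simp add: sum_p)

text \<open>As \<open>c\<close> is a function of \<open>g\<close>, the left-hand side is the conditional entropy of \<open>g\<close>
  given \<open>c\<close>.  The proof applies \<open>ln x \<le> x - 1\<close> to the ratio of the \<open>q\<close>-weighted conditional
  law of \<open>g\<close> given \<open>c\<close> to the true one.\<close>
lemma conditional_gibbs_inequality:
  assumes coarser: "\<And>w w'. w \<in> Om \<Longrightarrow> w' \<in> Om \<Longrightarrow> g w = g w' \<Longrightarrow> c w = c w'"
    and q_pos: "\<And>w. w \<in> Om \<Longrightarrow> q (g w) > 0"
  shows "entropy g - entropy c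
    \<le> expect (\<lambda>w. ln (\<Sum>y\<in>g ` {w'\<in>Om. c w' = c w}. q y) - ln (q (g w)))"
proof -
  define Q where "Q z = (\<Sum>y\<in>g ` {w'\<in>Om. c w' = z}. q y)" for z
  have Q_pos: "Q (c w) > 0" if "w \<in> Om" for w
    unfolding Q_def using that finite_Om q_pos
    by (intro sum_pos2[of _ "g w"]) (auto intro: less_imp_le)
  define x where "x w = law c (c w) / Q (c w) * q (g w) / law g (g w)" for w
  have x_pos: "x w > 0" if "w \<in> Om" for w
    unfolding x_def using law_pos[OF that, of c] law_pos[OF that, of g] q_pos[OF that] Q_pos[OF that]
    by simp
  have "expect x = (\<Sum>z\<in>c ` Om. law c z / Q z * Q z)"
    using expect_ratio_law[OF coarser, where \<psi> = "\<lambda>z. law c z / Q z" and \<phi> = q]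
    unfolding x_def Q_def .
  also have "\<dots> = (\<Sum>z\<in>c ` Om. law c z)"
    using Q_pos by (intro sum.cong) force+
  finally have "expect x = 1" by (simp add: sum_law)
  have "expect (\<lambda>w. ln (x w)) \<le> expect (\<lambda>w. x w - 1)"
    by (rule expect_mono) (use x_pos ln_le_minus_one in blast)
  also have "\<dots> = 0"
    by (simp add: expect_diff \<open>expect x = 1\<close>)
  moreover have "expect (\<lambda>w. ln (x w)) = entropy g - entropy c
      + expect (\<lambda>w. ln (q (g w)) - ln (Q (c w)))"
  proof -
    have "ln (x w) = ln (law c (c w)) - ln (law g (g w)) + (ln (q (g w)) - ln (Q (c w)))"
      if "w \<in> Om" for w
      unfolding x_def using law_pos[OF that, of c] law_pos[OF that, of g] q_pos[OF that] Q_pos[OF that]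
      by (simp add: ln_div ln_mult)
    then show ?thesis
      unfolding entropy_def by (simp add: expect_cong[of "\<lambda>w. ln (x w)"] expect_add expect_diff)
  qed
  ultimately show ?thesis unfolding Q_def expect_diff by linarith
qed

lemma gibbs_inequality:
  assumes "\<And>w. w \<in> Om \<Longrightarrow> q (g w) > 0"
  shows "entropy g \<le> ln (\<Sum>y\<in>g ` Om. q y) - expect (\<lambda>w. ln (q (g w)))"
  using conditional_gibbs_inequality[of g "\<lambda>_. ()" q] assms by (simp add: expect_diff)

text \<open>Conditional Gibbs inequality for \<open>g = (a, b, k)\<close> given \<open>(a, k)\<close>, with the weight
  \<open>q (a, b, k) = P(b, k) / P(k)\<close>, whose fibre sums are at most \<open>1\<close>.\<close>
lemma entropy_submodular:
  fixes a :: "'w \<Rightarrow> 'a" and b :: "'w \<Rightarrow> 'b" and k :: "'w \<Rightarrow> 'c"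
  shows "entropy (\<lambda>w. (a w, b w, k w)) + entropy k \<le> entropy (\<lambda>w. (a w, k w)) + entropy (\<lambda>w. (b w, k w))"
proof -
  define G where "G w = (a w, b w, k w)" for w
  define A where "A w = (a w, k w)" for w
  define B where "B w = (b w, k w)" for w
  define q where "q = (\<lambda>(x :: 'a, y, z). law B (y, z) / law k z)"
  have q_G: "q (G w) = law B (B w) / law k (k w)" for w
    unfolding q_def G_def B_def by simp
  have q_pos: "q (G w) > 0" if "w \<in> Om" for w
    unfolding q_G using law_pos[OF that, of B] law_pos[OF that, of k] by simp
  have Q_le_1: "(\<Sum>y\<in>G ` {w'\<in>Om. A w' = A w}. q y) \<le> 1" if "w \<in> Om" for w
  proof -
    let ?T = "{w'\<in>Om. A w' = A w}" and ?U = "{w'\<in>Om. k w' = k w}"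
    have "inj_on snd (G ` ?T)" by (rule inj_onI) (auto simp: G_def A_def)
    then have "(\<Sum>y\<in>G ` ?T. q y) = (\<Sum>y\<in>snd ` G ` ?T. law B y / law k (k w))"
      by (simp add: sum.reindex) (auto intro!: sum.cong simp: G_def A_def q_def)
    also have "\<dots> \<le> (\<Sum>y\<in>B ` ?U. law B y / law k (k w))"
      using finite_Om law_pos[OF that, of k]
      by (intro sum_mono2) (auto simp: G_def A_def B_def image_iff law_nonneg)
    also have "\<dots> = (\<Sum>y\<in>B ` ?U. law B y) / law k (k w)"
      by (simp add: sum_divide_distrib)
    also have "(\<Sum>y\<in>B ` ?U. law B y) = law k (k w)"
      by (rule sum_law_fibre) (simp add: B_def)
    also have "law k (k w) / law k (k w) = 1" using law_pos[OF that, of k] by simp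
    finally show ?thesis .
  qed
  have "entropy G - entropy A \<le> expect (\<lambda>w. ln (\<Sum>y\<in>G ` {w'\<in>Om. A w' = A w}. q y) - ln (q (G w)))"
    using q_pos by (intro conditional_gibbs_inequality) (auto simp: G_def A_def)
  also have "\<dots> \<le> expect (\<lambda>w. - ln (q (G w)))"
  proof (rule expect_mono)
    fix w assume w: "w \<in> Om"
    have "0 < (\<Sum>y\<in>G ` {w'\<in>Om. A w' = A w}. q y)"
      using w finite_Om q_pos
      by (intro sum_pos2[of _ "G w"]) (auto simp: q_def law_nonneg split: prod.split)
    then show "ln (\<Sum>y\<in>G ` {w'\<in>Om. A w' = A w}. q y) - ln (q (G w)) \<le> - ln (q (G w))"
      using Q_le_1[OF w] by simp
  qed
  also have "\<dots> = expect (\<lambda>w. ln (law k (k w)) - ln (law B (B w)))"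
  proof (rule expect_cong)
    fix w assume "w \<in> Om"
    then show "- ln (q (G w)) = ln (law k (k w)) - ln (law B (B w))"
      unfolding q_G using law_pos[of w B] law_pos[of w k] by (simp add: ln_div)
  qed
  also have "\<dots> = entropy B - entropy k"
    unfolding entropy_def expect_diff by simp
  finally show ?thesis unfolding G_def A_def B_def by linarith
qed

lemma entropy_restrict_submodular:
  "entropy (\<lambda>w. restrict (G w) (X \<union> Y)) + entropy (\<lambda>w. restrict (G w) (X \<inter> Y))
     \<le> entropy (\<lambda>w. restrict (G w) X) + entropy (\<lambda>w. restrict (G w) Y)"
proof -
  let ?r = "\<lambda>A w. restrict (G w) A"
  have "entropy (\<lambda>w. (?r (X - Y) w, ?r (Y - X) w, ?r (X \<inter> Y) w)) + entropy (?r (X \<inter> Y))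
      \<le> entropy (\<lambda>w. (?r (X - Y) w, ?r (X \<inter> Y) w)) + entropy (\<lambda>w. (?r (Y - X) w, ?r (X \<inter> Y) w))"
    by (rule entropy_submodular)
  moreover have "entropy (\<lambda>w. (?r (X - Y) w, ?r (Y - X) w, ?r (X \<inter> Y) w)) = entropy (?r (X \<union> Y))"
    and "entropy (\<lambda>w. (?r (X - Y) w, ?r (X \<inter> Y) w)) = entropy (?r X)"
    and "entropy (\<lambda>w. (?r (Y - X) w, ?r (X \<inter> Y) w)) = entropy (?r Y)"
    by (rule entropy_cong; auto simp: fun_eq_iff restrict_def)+
  ultimately show ?thesis by simp
qed

end

section \<open>Submodular set functions\<close>

lemma shearer_submodular:
  fixes h :: "'a set \<Rightarrow> real" and A :: "'i \<Rightarrow> 'a set"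
  assumes "finite V" and "finite J" and "h {} = 0"
    and "\<And>X Y. X \<subseteq> V \<Longrightarrow> Y \<subseteq> V \<Longrightarrow> h (X \<union> Y) + h (X \<inter> Y) \<le> h X + h Y"
    and c_nonneg: "\<And>i. i \<in> J \<Longrightarrow> c i \<ge> 0"
    and "\<And>i. i \<in> J \<Longrightarrow> A i \<subseteq> V"
    and "\<And>x. x \<in> V \<Longrightarrow> (\<Sum>i\<in>{i\<in>J. x \<in> A i}. c i) = 1"
  shows "h V \<le> (\<Sum>i\<in>J. c i * h (A i))"
  using assms(1,4,6,7)
proof (induction V arbitrary: A rule: finite_induct)
  case empty
  then show ?case using \<open>h {} = 0\<close> by simp
next
  case (insert x V)
  define A' where "A' i = A i - {x}" for i
  have "h V \<le> (\<Sum>i\<in>J. c i * h (A' i))"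
  proof (rule insert.IH)
    show "h (X \<union> Y) + h (X \<inter> Y) \<le> h X + h Y" if "X \<subseteq> V" "Y \<subseteq> V" for X Y
      using insert.prems(1) that by blast
    show "A' i \<subseteq> V" if "i \<in> J" for i
      using insert.prems(2)[OF that] unfolding A'_def by auto
    show "(\<Sum>i\<in>{i\<in>J. y \<in> A' i}. c i) = 1" if "y \<in> V" for y
    proof -
      have "{i\<in>J. y \<in> A' i} = {i\<in>J. y \<in> A i}"
        using insert.hyps(2) that unfolding A'_def by auto
      then show ?thesis using insert.prems(3)[of y] that by simp
    qed
  qed
  moreover
  define D where "D = h (insert x V) - h V"
  have "c i * h (A' i) + (if x \<in> A i then c i else 0) * D \<le> c i * h (A i)" if i: "i \<in> J" for i
  proof (cases "x \<in> A i")
    case True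
    have Ai: "A i \<subseteq> insert x V" using insert.prems(2)[OF i] .
    have "h (A i \<union> V) + h (A i \<inter> V) \<le> h (A i) + h V"
      using insert.prems(1) Ai by blast
    moreover have "A i \<union> V = insert x V" and "A i \<inter> V = A' i"
      using Ai True insert.hyps(2) unfolding A'_def by auto
    ultimately have "h (insert x V) + h (A' i) \<le> h (A i) + h V" by simp
    then have "h (A' i) + D \<le> h (A i)" unfolding D_def by linarith
    from mult_left_mono[OF this c_nonneg[OF i]] show ?thesis
      using True by (simp add: distrib_left)
  qed (simp add: A'_def)
  then have "(\<Sum>i\<in>J. c i * h (A' i)) + (\<Sum>i\<in>J. if x \<in> A i then c i else 0) * D
      \<le> (\<Sum>i\<in>J. c i * h (A i))"
    unfolding sum_distrib_right sum.distrib[symmetric] by (rule sum_mono)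
  moreover have "(\<Sum>i\<in>J. if x \<in> A i then c i else 0) = 1"
    using insert.prems(3)[of x] \<open>finite J\<close> by (simp add: sum.inter_filter)
  ultimately show ?case unfolding D_def by simp
qed

lemma submodular_union_bound:
  fixes h :: "'a set \<Rightarrow> real"
  assumes submodular: "\<And>X Y. h (X \<union> Y) + h (X \<inter> Y) \<le> h X + h Y"
    and "finite B" and "\<And>v. v \<in> B \<Longrightarrow> N v \<subseteq> A \<and> v \<notin> A"
  shows "h (A \<union> B) \<le> h A + (\<Sum>v\<in>B. h (insert v (N v)) - h (N v))"
  using assms(2,3)
proof (induction B rule: finite_induct)
  case (insert v B)
  have "N v \<subseteq> A" "v \<notin> A" using insert.prems by auto
  then have "(A \<union> B) \<union> insert v (N v) = A \<union> insert v B" and "(A \<union> B) \<inter> insert v (N v) = N v"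
    using insert.hyps(2) by auto
  then have "h (A \<union> insert v B) + h (N v) \<le> h (A \<union> B) + h (insert v (N v))"
    using submodular[of "A \<union> B" "insert v (N v)"] by simp
  moreover have "h (A \<union> B) \<le> h A + (\<Sum>v\<in>B. h (insert v (N v)) - h (N v))"
    using insert.IH insert.prems by simp
  ultimately show ?case using insert.hyps by simp
qed simp

section \<open>Nearest-neighbour geometry of the lattice\<close>

lemma nbrs_eq: "nbrs v = range (\<lambda>i. v + axis i 1) \<union> range (\<lambda>i. v - axis i 1)"
  by (auto simp: nbrs_def)

lemma finite_nbrs [simp]: "finite (nbrs v)"
  by (simp add: nbrs_eq)

lemma card_nbrs: "card (nbrs (v :: 'd::finite vertex)) = 2 * CARD('d)"
proof -
  have "inj (\<lambda>i. v + axis i (1::int))" and "inj (\<lambda>i. v - axis i (1::int))"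
    by (auto intro!: injI simp: axis_eq_axis)
  moreover have "range (\<lambda>i. v + axis i (1::int)) \<inter> range (\<lambda>i. v - axis i 1) = {}"
  proof -
    have "v + axis i (1::int) \<noteq> v - axis j 1" for i j
    proof
      assume "v + axis i (1::int) = v - axis j 1"
      then have "(v + axis i (1::int)) $ i = (v - axis j 1) $ i" by simp
      then show False by (auto simp: axis_def split: if_splits)
    qed
    then show ?thesis by blast
  qed
  ultimately show ?thesis
    unfolding nbrs_eq by (simp add: card_Un_disjoint card_image)
qed

lemma nbrs_sym: "u \<in> nbrs v \<longleftrightarrow> v \<in> nbrs u"
proof -
  have "v \<in> nbrs u" if "u \<in> nbrs v" for u v :: "'d::finite vertex"
  proof -
    from that obtain i where "u = v + axis i 1 \<or> u = v - axis i 1"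
      unfolding nbrs_def by auto
    then have "v = u - axis i 1 \<or> v = u + axis i 1" by auto
    then show ?thesis unfolding nbrs_def by auto
  qed
  then show ?thesis by blast
qed

lemma odd_vertex_nbr: "u \<in> nbrs v \<Longrightarrow> odd_vertex u \<longleftrightarrow> \<not> odd_vertex v"
proof -
  assume "u \<in> nbrs v"
  then obtain i where "u = v + axis i 1 \<or> u = v - axis i 1" unfolding nbrs_def by auto
  then have "(\<Sum>j\<in>UNIV. u $ j) = (\<Sum>j\<in>UNIV. v $ j) + 1 \<or> (\<Sum>j\<in>UNIV. u $ j) = (\<Sum>j\<in>UNIV. v $ j) - 1"
    by (auto simp: axis_def sum.distrib sum_subtractf)
  then show ?thesis unfolding odd_vertex_def by auto
qed

lemma even_vertex_iff: "even_vertex v \<longleftrightarrow> \<not> odd_vertex v"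
  unfolding even_vertex_def odd_vertex_def by simp

lemma nbrs_subset_if_odd: "even_set S \<Longrightarrow> v \<in> S \<Longrightarrow> odd_vertex v \<Longrightarrow> nbrs v \<subseteq> S"
  unfolding even_set_def inner_boundary_def by (auto simp: even_vertex_iff)

lemma edge_weight_doubleton:
  assumes "\<And>i j. lam2 i j = lam2 j i"
  shows "edge_weight lam2 f {a, b} = lam2 (f a) (f b)"
proof -
  define q where "q = (SOME q. {a, b} = {fst q, snd q})"
  have "{a, b} = {fst q, snd q}" unfolding q_def by (rule someI[where x="(a, b)"]) simp
  then have "(fst q = a \<and> snd q = b) \<or> (fst q = b \<and> snd q = a)" by (auto simp: doubleton_eq_iff)
  then show ?thesis unfolding edge_weight_def q_def[symmetric] Let_def using assms by auto
qed

text \<open>In an even set every edge has exactly one odd endpoint, and all neighbours of an odd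
  vertex of the set lie in it.\<close>
lemma edges_in_odd_eq:
  assumes "even_set S"
  shows "edges_in S = (\<lambda>(v, u). {v, u}) ` (SIGMA v:{v\<in>S. odd_vertex v}. nbrs v)"
    and "inj_on (\<lambda>(v, u). {v, u}) (SIGMA v:{v\<in>S. odd_vertex v}. nbrs v)"
proof -
  show "edges_in S = (\<lambda>(v, u). {v, u}) ` (SIGMA v:{v\<in>S. odd_vertex v}. nbrs v)"
  proof (intro equalityI subsetI)
    fix e assume "e \<in> edges_in S"
    then obtain u v where e: "e = {u, v}" "u \<in> S" "v \<in> S" "v \<in> nbrs u"
      unfolding edges_in_def adj_def by auto
    show "e \<in> (\<lambda>(v, u). {v, u}) ` (SIGMA v:{v\<in>S. odd_vertex v}. nbrs v)"
    proof (cases "odd_vertex u")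
      case True
      then show ?thesis using e by (auto intro!: image_eqI[where x="(u, v)"])
    next
      case False
      then show ?thesis using e odd_vertex_nbr[OF e(4)] nbrs_sym
        by (auto intro!: image_eqI[where x="(v, u)"])
    qed
  next
    fix e assume "e \<in> (\<lambda>(v, u). {v, u}) ` (SIGMA v:{v\<in>S. odd_vertex v}. nbrs v)"
    then obtain v u where "e = {v, u}" "v \<in> S" "odd_vertex v" "u \<in> nbrs v" by auto
    moreover from this have "u \<in> S" using nbrs_subset_if_odd[OF assms] by auto
    ultimately show "e \<in> edges_in S" unfolding edges_in_def adj_def by blast
  qed
  show "inj_on (\<lambda>(v, u). {v, u}) (SIGMA v:{v\<in>S. odd_vertex v}. nbrs v)"
  proof (rule inj_onI, clarsimp)
    fix v u v' u'
    assume "odd_vertex v" "u \<in> nbrs v" "odd_vertex v'" "u' \<in> nbrs v'" "{v, u} = {v', u'}"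
    moreover from this have "\<not> odd_vertex u" "\<not> odd_vertex u'"
      using odd_vertex_nbr by blast+
    ultimately show "v = v' \<and> u = u'" by (auto simp: doubleton_eq_iff)
  qed
qed

lemma prod_edges_in_even_set:
  assumes "even_set S" and "finite S"
  shows "(\<Prod>e\<in>edges_in S. g e) = (\<Prod>v\<in>{v\<in>S. odd_vertex v}. \<Prod>u\<in>nbrs v. g {v, u})"
  unfolding edges_in_odd_eq(1)[OF assms(1)] prod.reindex[OF edges_in_odd_eq(2)[OF assms(1)]]
  using assms(2) by (subst prod.Sigma) (auto simp: case_prod_beta)

lemma card_boundary_edges_at:
  assumes "u \<in> S"
  shows "card (incident_edges u \<inter> edge_boundary S) = card (nbrs u - S)"
proof -
  have "incident_edges u \<inter> edge_boundary S = (\<lambda>w. {u, w}) ` (nbrs u - S)"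
  proof (intro equalityI subsetI)
    fix e assume e: "e \<in> incident_edges u \<inter> edge_boundary S"
    then obtain w where w: "e = {u, w}" "w \<in> nbrs u"
      unfolding incident_edges_def adj_def by auto
    from e obtain a b where "e = {a, b}" "a \<in> S" "b \<notin> S"
      unfolding edge_boundary_def by auto
    with w assms have "w = b" by (auto simp: doubleton_eq_iff)
    with w \<open>b \<notin> S\<close> show "e \<in> (\<lambda>w. {u, w}) ` (nbrs u - S)" by auto
  next
    fix e assume "e \<in> (\<lambda>w. {u, w}) ` (nbrs u - S)"
    then show "e \<in> incident_edges u \<inter> edge_boundary S"
      using assms unfolding incident_edges_def edge_boundary_def adj_def by blast
  qed
  moreover have "inj_on (\<lambda>w. {u, w}) (nbrs u - S)"
    by (auto simp: inj_on_def doubleton_eq_iff)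
  ultimately show ?thesis by (simp add: card_image)
qed

lemma card_odd_nbrs_add_card_boundary_edges:
  fixes u :: "'d::finite vertex"
  assumes "u \<in> S" and "\<not> odd_vertex u"
  shows "card {v\<in>S. odd_vertex v \<and> u \<in> nbrs v} + card (incident_edges u \<inter> edge_boundary S)
    = 2 * CARD('d)"
proof -
  have "{v\<in>S. odd_vertex v \<and> u \<in> nbrs v} = nbrs u \<inter> S"
    using assms(2) odd_vertex_nbr nbrs_sym by blast
  then show ?thesis
    using card_boundary_edges_at[OF assms(1)] card_Int_Diff[OF finite_nbrs, of u S] card_nbrs[of u]
    by simp
qed

section \<open>The Gibbs measure of a spin system\<close>

locale spin_gibbs =
  fixes lam :: "'s::finite \<Rightarrow> real" and lam2 :: "'s \<Rightarrow> 's \<Rightarrow> real"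
    and S :: "'d::finite vertex set"
    and Su :: "'d vertex \<Rightarrow> 's set"
    and F :: "('d vertex \<Rightarrow> 's) set"
    and X :: "'d vertex \<Rightarrow> ('d vertex \<Rightarrow> 's) \<Rightarrow> 'x"
  assumes spin: "spin_system lam lam2"
    and finite_S: "finite S" and even_S: "even_set S"
    and F_sub: "F \<subseteq> S \<rightarrow>\<^sub>E (UNIV :: 's set)"
    and F_boundary: "\<forall>f\<in>F. \<forall>u\<in>inner_boundary S. f u \<in> Su u"
    and X_local: "\<forall>v\<in>S. odd_vertex v \<longrightarrow> (\<forall>f g. (\<forall>u\<in>nbrs v. f u = g u) \<longrightarrow> X v f = X v g)"
    and Z_pos: "total_weight lam lam2 S F > 0"
begin

abbreviation W :: "('d vertex \<Rightarrow> 's) \<Rightarrow> real" where "W \<equiv> weight lam lam2 S"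
abbreviation Z :: real where "Z \<equiv> total_weight lam lam2 S F"
abbreviation odd_sites :: "'d vertex set" where "odd_sites \<equiv> {v\<in>S. odd_vertex v}"
abbreviation even_sites :: "'d vertex set" where "even_sites \<equiv> {v\<in>S. \<not> odd_vertex v}"

text \<open>The Gibbs measure lives on its support \<open>Om\<close>, so that every logarithm below is taken of a
  positive number.\<close>

definition Om :: "('d vertex \<Rightarrow> 's) set" where
  "Om = {f\<in>F. W f > 0}"

definition p :: "('d vertex \<Rightarrow> 's) \<Rightarrow> real" where
  "p f = W f / Z"

definition site_weight :: "'d vertex \<Rightarrow> ('d vertex \<Rightarrow> 's) \<Rightarrow> real" where
  "site_weight v f = lam (f v) * (\<Prod>u\<in>nbrs v. lam2 (f v) (f u))"

lemma lam_pos: "lam i > 0" and lam2_nonneg: "lam2 i j \<ge> 0" and lam2_sym: "lam2 i j = lam2 j i"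
  using spin unfolding spin_system_def by auto

lemma finite_F: "finite F"
  using F_sub finite_PiE[OF finite_S, of "\<lambda>_. UNIV :: 's set"] finite_subset by auto

lemma weight_nonneg: "W f \<ge> 0"
  unfolding weight_def edge_weight_def Let_def using lam_pos lam2_nonneg
  by (intro mult_nonneg_nonneg prod_nonneg) (auto intro: less_imp_le)

lemma sum_weight_Om: "(\<Sum>f\<in>{f\<in>F. P f}. W f) = (\<Sum>f\<in>{f\<in>Om. P f}. W f)"
  unfolding Om_def using finite_F weight_nonneg
  by (intro sum.mono_neutral_right) (auto simp: order.order_iff_strict)

sublocale gibbs: finite_distribution Om p
proof
  show "finite Om" unfolding Om_def using finite_F by simp
  show "p f > 0" if "f \<in> Om" for f
    using that Z_pos unfolding Om_def p_def by simp
  show "sum p Om = 1"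
    using sum_weight_Om[of "\<lambda>_. True"] Z_pos
    unfolding p_def total_weight_def by (simp add: sum_divide_distrib[symmetric])
qed

lemma prob_X_eq_law: "prob_X lam lam2 S F Y x = gibbs.law Y x"
  unfolding prob_X_def gibbs.law_def p_def sum_weight_Om total_weight_def
  by (simp add: sum_divide_distrib)

lemma supp_X_eq_image: "supp_X lam lam2 S F Y = Y ` Om"
  unfolding supp_X_def prob_X_eq_law gibbs.law_pos_iff by simp

lemma restrict_S_eq: "f \<in> F \<Longrightarrow> restrict f S = f"
  using F_sub by (auto intro: PiE_restrict)

lemma Om_nonempty: "Om \<noteq> {}"
  using sum_weight_Om[of "\<lambda>_. True"] Z_pos unfolding total_weight_def by auto

lemma weight_split: "W f = (\<Prod>u\<in>even_sites. lam (f u)) * (\<Prod>v\<in>odd_sites. site_weight v f)"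
proof -
  have "(\<Prod>v\<in>S. lam (f v)) = (\<Prod>u\<in>even_sites. lam (f u)) * (\<Prod>v\<in>odd_sites. lam (f v))"
    using finite_S by (subst prod.union_disjoint[symmetric]) (auto intro: prod.cong)
  moreover have "(\<Prod>e\<in>edges_in S. edge_weight lam2 f e) = (\<Prod>v\<in>odd_sites. \<Prod>u\<in>nbrs v. lam2 (f v) (f u))"
    unfolding prod_edges_in_even_set[OF even_S finite_S] by (simp add: edge_weight_doubleton lam2_sym)
  ultimately show ?thesis
    unfolding weight_def site_weight_def prod.distrib by (simp add: mult.assoc)
qed

lemma site_weight_nonneg: "site_weight v f \<ge> 0"
  unfolding site_weight_def using lam_pos lam2_nonneg
  by (intro mult_nonneg_nonneg prod_nonneg) (auto intro: less_imp_le)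

lemma site_weight_pos:
  assumes "f \<in> Om" and "v \<in> odd_sites"
  shows "site_weight v f > 0"
proof -
  have "(\<Prod>v\<in>odd_sites. site_weight v f) \<noteq> 0"
    using assms(1) weight_split[of f] unfolding Om_def by auto
  then have "site_weight v f \<noteq> 0" using assms(2) finite_S by auto
  then show ?thesis using site_weight_nonneg[of v f] by simp
qed

definition marginal_entropy :: "'d vertex set \<Rightarrow> real" where
  "marginal_entropy A = gibbs.entropy (\<lambda>f. restrict f A)"

definition mean_log_activity :: "'d vertex set \<Rightarrow> real" where
  "mean_log_activity A = gibbs.expect (\<lambda>f. \<Sum>u\<in>A. ln (lam (f u)))"

definition weighted_entropy :: "'d vertex set \<Rightarrow> real" where
  "weighted_entropy A = marginal_entropy A + mean_log_activity A"

lemma ln_Z_eq: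
  "ln Z = marginal_entropy S + mean_log_activity even_sites
          + (\<Sum>v\<in>odd_sites. gibbs.expect (\<lambda>f. ln (site_weight v f)))"
proof -
  have "gibbs.law (\<lambda>f. restrict f S) (restrict f S) = p f" if "f \<in> Om" for f
  proof -
    have "{g\<in>Om. restrict g S = restrict f S} = {f}"
      using that restrict_S_eq unfolding Om_def by auto
    then show ?thesis unfolding gibbs.law_def by simp
  qed
  then have "marginal_entropy S = - gibbs.expect (\<lambda>f. ln (W f) - ln Z)"
    unfolding marginal_entropy_def gibbs.entropy_def
    using Z_pos by (intro arg_cong[where f = uminus] gibbs.expect_cong) (simp add: p_def Om_def ln_div)
  moreover have "gibbs.expect (\<lambda>f. ln (W f)) = mean_log_activity even_sites
      + (\<Sum>v\<in>odd_sites. gibbs.expect (\<lambda>f. ln (site_weight v f)))"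
  proof -
    have "ln (W f) = (\<Sum>u\<in>even_sites. ln (lam (f u))) + (\<Sum>v\<in>odd_sites. ln (site_weight v f))"
      if "f \<in> Om" for f
    proof -
      have "ln (\<Prod>v\<in>odd_sites. site_weight v f) = (\<Sum>v\<in>odd_sites. ln (site_weight v f))"
        using finite_S site_weight_pos[OF that] by (intro ln_prod) (auto simp: order_less_imp_not_eq2)
      then show ?thesis
        unfolding weight_split using finite_S lam_pos site_weight_pos[OF that]
        by (simp add: ln_mult prod_pos ln_prod order_less_imp_not_eq2)
    qed
    then show ?thesis
      unfolding mean_log_activity_def gibbs.expect_sum[symmetric] gibbs.expect_add[symmetric]
      by (rule gibbs.expect_cong)
  qed
  ultimately show ?thesis
    unfolding gibbs.expect_diff by simp
qed

lemma marginal_entropy_submodular: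
  "marginal_entropy (A \<union> B) + marginal_entropy (A \<inter> B) \<le> marginal_entropy A + marginal_entropy B"
  unfolding marginal_entropy_def by (rule gibbs.entropy_restrict_submodular[of "\<lambda>f. f"])

lemma marginal_entropy_empty: "marginal_entropy {} = 0"
  unfolding marginal_entropy_def by (simp add: restrict_def)

lemma weighted_entropy_submodular:
  assumes "finite A" and "finite B"
  shows "weighted_entropy (A \<union> B) + weighted_entropy (A \<inter> B) \<le> weighted_entropy A + weighted_entropy B"
proof -
  have "mean_log_activity (A \<union> B) + mean_log_activity (A \<inter> B) = mean_log_activity A + mean_log_activity B"
    unfolding mean_log_activity_def gibbs.expect_add[symmetric] sum.union_inter[OF assms] ..
  then show ?thesis
    using marginal_entropy_submodular[of A B] unfolding weighted_entropy_def by linarith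
qed

lemma nbrs_subset_even_sites: "v \<in> odd_sites \<Longrightarrow> nbrs v \<subseteq> even_sites"
  using nbrs_subset_if_odd[OF even_S] odd_vertex_nbr by blast

lemma marginal_entropy_S_le:
  "marginal_entropy S \<le> marginal_entropy even_sites
     + (\<Sum>v\<in>odd_sites. marginal_entropy (insert v (nbrs v)) - marginal_entropy (nbrs v))"
proof -
  have "S = even_sites \<union> odd_sites" by auto
  then show ?thesis
    using submodular_union_bound[of marginal_entropy odd_sites nbrs even_sites]
      marginal_entropy_submodular nbrs_subset_even_sites finite_S by auto
qed

abbreviation boundary_degree :: "'d vertex \<Rightarrow> real" where
  "boundary_degree u \<equiv> real (card (incident_edges u \<inter> edge_boundary S))"

text \<open>Shearer's inequality for the fractional cover of the even sites by the neighbourhoods of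
  the odd sites, with weight \<open>1 / (2 d)\<close>, and the boundary singletons \<open>{u}\<close>, with weight
  \<open>boundary_degree u / (2 d)\<close>.\<close>
lemma weighted_entropy_even_sites_le:
  "weighted_entropy even_sites
     \<le> (\<Sum>v\<in>odd_sites. weighted_entropy (nbrs v) / (2 * real CARD('d)))
       + (\<Sum>u\<in>inner_boundary S. boundary_degree u / (2 * real CARD('d)) * weighted_entropy {u})"
proof -
  let ?Bd = "inner_boundary S"
  define J where "J = odd_sites \<union> ?Bd"
  define A where "A i = (if odd_vertex i then nbrs i else {i})" for i :: "'d vertex"
  define c where "c i = (if odd_vertex i then 1 else boundary_degree i) / (2 * real CARD('d))"
    for i :: "'d vertex"
  have Bd_even: "?Bd \<subseteq> even_sites"
    using even_S unfolding even_set_def inner_boundary_def by (auto simp: even_vertex_iff)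
  have finite_Bd: "finite ?Bd" using finite_S unfolding inner_boundary_def by auto
  have "weighted_entropy even_sites \<le> (\<Sum>i\<in>J. c i * weighted_entropy (A i))"
  proof (rule shearer_submodular)
    show "finite even_sites" "finite J" using finite_S finite_Bd unfolding J_def by auto
    show "weighted_entropy {} = 0"
      unfolding weighted_entropy_def mean_log_activity_def marginal_entropy_empty by simp
    show "weighted_entropy (X \<union> Y) + weighted_entropy (X \<inter> Y) \<le> weighted_entropy X + weighted_entropy Y"
      if "X \<subseteq> even_sites" "Y \<subseteq> even_sites" for X Y
      using that finite_S by (intro weighted_entropy_submodular) (auto intro: finite_subset)
    show "c i \<ge> 0" for i unfolding c_def by simp
    show "A i \<subseteq> even_sites" if "i \<in> J" for i
      using that Bd_even nbrs_subset_even_sites unfolding J_def A_def by auto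
    show "(\<Sum>i\<in>{i\<in>J. x \<in> A i}. c i) = 1" if x: "x \<in> even_sites" for x
    proof -
      let ?O = "{v\<in>S. odd_vertex v \<and> x \<in> nbrs v}"
      have "{i\<in>J. x \<in> A i} = ?O \<union> (?Bd \<inter> {x})" and "?O \<inter> (?Bd \<inter> {x}) = {}"
        using x Bd_even unfolding J_def A_def by auto
      then have "(\<Sum>i\<in>{i\<in>J. x \<in> A i}. c i) = (\<Sum>i\<in>?O. c i) + (\<Sum>i\<in>?Bd \<inter> {x}. c i)"
        using finite_S finite_Bd by (simp add: sum.union_disjoint)
      also have "\<dots> = (card ?O + boundary_degree x) / (2 * real CARD('d))"
        using x card_boundary_edges_at[of x S] unfolding c_def
        by (cases "x \<in> ?Bd") (auto simp: inner_boundary_def add_divide_distrib)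
      also have "\<dots> = 1"
        using arg_cong[where f = real, OF card_odd_nbrs_add_card_boundary_edges[of x S]] x by simp
      finally show ?thesis .
    qed
  qed
  also have "\<dots> = (\<Sum>v\<in>odd_sites. weighted_entropy (nbrs v) / (2 * real CARD('d)))
       + (\<Sum>u\<in>?Bd. boundary_degree u / (2 * real CARD('d)) * weighted_entropy {u})"
    unfolding J_def using finite_S finite_Bd Bd_even
    by (subst sum.union_disjoint) (auto simp: A_def c_def intro!: sum.cong)
  finally show ?thesis .
qed

lemma weighted_entropy_boundary_site:
  assumes "u \<in> inner_boundary S"
  shows "weighted_entropy {u} \<le> ln (lam_set lam (Su u))"
proof -
  have "marginal_entropy {u} = gibbs.entropy (\<lambda>f. f u)"
    unfolding marginal_entropy_def by (rule gibbs.entropy_cong) (auto simp: fun_eq_iff restrict_def)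
  also have "\<dots> \<le> ln (\<Sum>y\<in>(\<lambda>f. f u) ` Om. lam y) - gibbs.expect (\<lambda>f. ln (lam (f u)))"
    using lam_pos by (rule gibbs.gibbs_inequality)
  also have "ln (\<Sum>y\<in>(\<lambda>f. f u) ` Om. lam y) \<le> ln (lam_set lam (Su u))"
  proof -
    have "(\<lambda>f. f u) ` Om \<subseteq> Su u"
      using F_boundary assms unfolding Om_def by auto
    then have "(\<Sum>y\<in>(\<lambda>f. f u) ` Om. lam y) \<le> lam_set lam (Su u)"
      unfolding lam_set_def using lam_pos by (intro sum_mono2) (auto intro: less_imp_le)
    moreover have "(\<Sum>y\<in>(\<lambda>f. f u) ` Om. lam y) > 0"
      using Om_nonempty gibbs.finite_Om lam_pos by (simp add: sum_pos)
    ultimately show ?thesis by simp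
  qed
  finally show ?thesis
    unfolding weighted_entropy_def mean_log_activity_def by simp
qed

definition site_partition :: "'d vertex \<Rightarrow> ('d vertex \<Rightarrow> 's) \<Rightarrow> real" where
  "site_partition v f =
     (\<Sum>i\<in>I_set lam lam2 S F (X v) v (X v f). lam i * (\<Prod>u\<in>nbrs v. lam2 i (f u)))"

definition nbrs_weight :: "'d vertex \<Rightarrow> ('d vertex \<Rightarrow> 's) \<Rightarrow> real" where
  "nbrs_weight v \<psi> = (\<Prod>u\<in>nbrs v. lam (\<psi> u)) * site_partition v \<psi> ^ (2 * CARD('d))"

definition local_Z :: "'d vertex \<Rightarrow> 'x \<Rightarrow> real" where
  "local_Z v x = Zfun lam lam2 v (Psi_set lam lam2 S F (X v) v x) (I_set lam lam2 S F (X v) v x)"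

definition odd_site_bound :: "'d vertex \<Rightarrow> real" where
  "odd_site_bound v =
     (\<Sum>x\<in>X v ` Om. gibbs.law (X v) x / (2 * real CARD('d)) * ln (local_Z v x / gibbs.law (X v) x))"

lemma X_restrict_nbrs: "v \<in> odd_sites \<Longrightarrow> X v (restrict f (nbrs v)) = X v f"
  using X_local by auto

lemma site_partition_restrict_nbrs:
  "v \<in> odd_sites \<Longrightarrow> site_partition v (restrict f (nbrs v)) = site_partition v f"
  unfolding site_partition_def X_restrict_nbrs by simp

lemma site_partition_pos:
  assumes "f \<in> Om" and "v \<in> odd_sites"
  shows "site_partition v f > 0"
  unfolding site_partition_def
proof (rule sum_pos2)
  show "f v \<in> I_set lam lam2 S F (X v) v (X v f)"
    using assms(1) unfolding I_set_def Om_def by auto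
  show "lam (f v) * (\<Prod>u\<in>nbrs v. lam2 (f v) (f u)) > 0"
    using site_weight_pos[OF assms] unfolding site_weight_def .
  show "lam i * (\<Prod>u\<in>nbrs v. lam2 i (f u)) \<ge> 0" for i
    using lam_pos lam2_nonneg by (intro mult_nonneg_nonneg prod_nonneg) (auto intro: less_imp_le)
qed simp

lemma nbrs_weight_pos:
  "f \<in> Om \<Longrightarrow> v \<in> odd_sites \<Longrightarrow> nbrs_weight v (restrict f (nbrs v)) > 0"
  unfolding nbrs_weight_def site_partition_restrict_nbrs
  using site_partition_pos lam_pos by (simp add: prod_pos)

lemma local_Z_eq:
  assumes "v \<in> odd_sites"
  shows "local_Z v x = (\<Sum>\<psi>\<in>(\<lambda>f. restrict f (nbrs v)) ` {f\<in>Om. X v f = x}. nbrs_weight v \<psi>)"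
proof -
  have "Psi_set lam lam2 S F (X v) v x = (\<lambda>f. restrict f (nbrs v)) ` {f\<in>Om. X v f = x}"
    unfolding Psi_set_def Om_def by auto
  then show ?thesis
    unfolding local_Z_def Zfun_def
  proof (intro sum.cong)
    fix \<psi> assume "\<psi> \<in> (\<lambda>f. restrict f (nbrs v)) ` {f\<in>Om. X v f = x}"
    then have "X v \<psi> = x" using X_restrict_nbrs[OF assms] by auto
    then show "(\<Prod>u\<in>nbrs v. lam (\<psi> u)) *
        (\<Sum>i\<in>I_set lam lam2 S F (X v) v x. lam i * (\<Prod>u\<in>nbrs v. lam2 i (\<psi> u))) ^ (2 * CARD('d))
        = nbrs_weight v \<psi>"
      unfolding nbrs_weight_def site_partition_def by simp
  qed
qed

lemma local_Z_pos:
  assumes "v \<in> odd_sites" and "x \<in> X v ` Om"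
  shows "local_Z v x > 0"
  unfolding local_Z_eq[OF assms(1)] using assms gibbs.finite_Om nbrs_weight_pos
  by (intro sum_pos) auto

lemma sum_site_weight_fibre_le:
  assumes v: "v \<in> odd_sites" and f: "f \<in> Om"
  shows "(\<Sum>y\<in>(\<lambda>h. restrict h (insert v (nbrs v))) ` {h\<in>Om. restrict h (nbrs v) = restrict f (nbrs v)}.
            site_weight v y) \<le> site_partition v f"
proof -
  let ?T = "(\<lambda>h. restrict h (insert v (nbrs v))) ` {h\<in>Om. restrict h (nbrs v) = restrict f (nbrs v)}"
  define \<phi> where "\<phi> i = lam i * (\<Prod>u\<in>nbrs v. lam2 i (f u))" for i
  have T: "\<exists>h. h \<in> Om \<and> (\<forall>u\<in>nbrs v. h u = f u) \<and> y = restrict h (insert v (nbrs v))"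
    if "y \<in> ?T" for y
    using that by (auto simp: restrict_eq_restrict_iff)
  have "(\<Sum>y\<in>?T. site_weight v y) = (\<Sum>y\<in>?T. \<phi> (y v))"
  proof (rule sum.cong[OF refl])
    fix y assume "y \<in> ?T"
    then obtain h where "\<forall>u\<in>nbrs v. h u = f u" "y = restrict h (insert v (nbrs v))"
      using T by blast
    then show "site_weight v y = \<phi> (y v)"
      unfolding site_weight_def \<phi>_def by (simp cong: prod.cong)
  qed
  also have "\<dots> = (\<Sum>i\<in>(\<lambda>y. y v) ` ?T. \<phi> i)"
  proof (rule sum.reindex[symmetric, unfolded comp_def], rule inj_onI)
    fix y1 y2 assume "y1 \<in> ?T" "y2 \<in> ?T" "y1 v = y2 v"
    then show "y1 = y2" using T[of y1] T[of y2] by (auto simp: restrict_eq_restrict_iff)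
  qed
  also have "\<dots> \<le> (\<Sum>i\<in>I_set lam lam2 S F (X v) v (X v f). \<phi> i)"
  proof (rule sum_mono2)
    show "(\<lambda>y. y v) ` ?T \<subseteq> I_set lam lam2 S F (X v) v (X v f)"
    proof
      fix i assume "i \<in> (\<lambda>y. y v) ` ?T"
      then obtain h where "h \<in> Om" "\<forall>u\<in>nbrs v. h u = f u" "i = h v" using T by fastforce
      moreover from this have "X v h = X v f" using X_local v by auto
      ultimately show "i \<in> I_set lam lam2 S F (X v) v (X v f)"
        unfolding I_set_def Om_def by auto
    qed
    show "\<phi> i \<ge> 0" for i
      unfolding \<phi>_def using lam_pos lam2_nonneg
      by (intro mult_nonneg_nonneg prod_nonneg) (auto intro: less_imp_le)
  qed simp
  also have "\<dots> = site_partition v f"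
    unfolding site_partition_def \<phi>_def ..
  finally show ?thesis .
qed

lemma entropy_site_given_nbrs_le:
  assumes v: "v \<in> odd_sites"
  shows "marginal_entropy (insert v (nbrs v)) - marginal_entropy (nbrs v)
           + gibbs.expect (\<lambda>f. ln (site_weight v f))
         \<le> gibbs.expect (\<lambda>f. ln (site_partition v f))"
proof -
  let ?g = "\<lambda>f. restrict f (insert v (nbrs v))" and ?c = "\<lambda>f. restrict f (nbrs v)"
  let ?T = "\<lambda>f. ?g ` {h\<in>Om. ?c h = ?c f}"
  have site_weight_g: "site_weight v (?g f) = site_weight v f" for f
    unfolding site_weight_def by (simp cong: prod.cong)
  have "marginal_entropy (insert v (nbrs v)) - marginal_entropy (nbrs v)
      \<le> gibbs.expect (\<lambda>f. ln (\<Sum>y\<in>?T f. site_weight v y) - ln (site_weight v (?g f)))"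
    unfolding marginal_entropy_def
    using site_weight_pos[OF _ v] site_weight_g
    by (intro gibbs.conditional_gibbs_inequality) (auto simp: restrict_eq_restrict_iff)
  also have "\<dots> \<le> gibbs.expect (\<lambda>f. ln (site_partition v f) - ln (site_weight v f))"
  proof (rule gibbs.expect_mono)
    fix f assume f: "f \<in> Om"
    have "0 < (\<Sum>y\<in>?T f. site_weight v y)"
      using f gibbs.finite_Om site_weight_pos[OF f v] site_weight_g site_weight_nonneg
      by (intro sum_pos2[of _ "?g f"]) auto
    then show "ln (\<Sum>y\<in>?T f. site_weight v y) - ln (site_weight v (?g f))
        \<le> ln (site_partition v f) - ln (site_weight v f)"
      using sum_site_weight_fibre_le[OF v f] site_weight_g by simp
  qed
  finally show ?thesis unfolding gibbs.expect_diff by linarith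
qed

lemma weighted_entropy_nbrs_le:
  assumes v: "v \<in> odd_sites"
  shows "weighted_entropy (nbrs v) + 2 * real CARD('d) * gibbs.expect (\<lambda>f. ln (site_partition v f))
         \<le> (\<Sum>x\<in>X v ` Om. gibbs.law (X v) x * ln (local_Z v x / gibbs.law (X v) x))"
proof -
  let ?\<psi> = "\<lambda>f. restrict f (nbrs v)"
  have ln_nbrs_weight: "ln (nbrs_weight v (?\<psi> f))
      = (\<Sum>u\<in>nbrs v. ln (lam (f u))) + 2 * real CARD('d) * ln (site_partition v f)"
    if "f \<in> Om" for f
    unfolding nbrs_weight_def site_partition_restrict_nbrs[OF v]
    using site_partition_pos[OF that v] lam_pos
    by (simp add: ln_mult prod_pos ln_prod ln_realpow order_less_imp_not_eq2)
  have "marginal_entropy (nbrs v) - gibbs.entropy (X v)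
      \<le> gibbs.expect (\<lambda>f. ln (\<Sum>\<psi>\<in>?\<psi> ` {h\<in>Om. X v h = X v f}. nbrs_weight v \<psi>) - ln (nbrs_weight v (?\<psi> f)))"
    unfolding marginal_entropy_def using X_local v nbrs_weight_pos[OF _ v]
    by (intro gibbs.conditional_gibbs_inequality) (auto simp: restrict_eq_restrict_iff)
  also have "\<dots> = gibbs.expect (\<lambda>f. ln (local_Z v (X v f)))
      - mean_log_activity (nbrs v) - 2 * real CARD('d) * gibbs.expect (\<lambda>f. ln (site_partition v f))"
    unfolding local_Z_eq[OF v, symmetric] mean_log_activity_def
    by (simp add: ln_nbrs_weight gibbs.expect_diff gibbs.expect_add gibbs.expect_scale cong: gibbs.expect_cong)
  finally have "weighted_entropy (nbrs v) + 2 * real CARD('d) * gibbs.expect (\<lambda>f. ln (site_partition v f))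
      \<le> gibbs.entropy (X v) + gibbs.expect (\<lambda>f. ln (local_Z v (X v f)))"
    unfolding weighted_entropy_def by linarith
  also have "\<dots> = (\<Sum>x\<in>X v ` Om. gibbs.law (X v) x * ln (local_Z v x))
      - (\<Sum>x\<in>X v ` Om. gibbs.law (X v) x * ln (gibbs.law (X v) x))"
    unfolding gibbs.entropy_eq_sum_law gibbs.expect_comp[of "\<lambda>x. ln (local_Z v x)" "X v"] by simp
  also have "\<dots> = (\<Sum>x\<in>X v ` Om. gibbs.law (X v) x * ln (local_Z v x / gibbs.law (X v) x))"
    unfolding sum_subtractf[symmetric]
  proof (rule sum.cong[OF refl])
    fix x assume x: "x \<in> X v ` Om"
    then have "local_Z v x > 0" and "gibbs.law (X v) x > 0"
      using local_Z_pos[OF v x] gibbs.law_pos_iff[of "X v" x] by auto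
    then show "gibbs.law (X v) x * ln (local_Z v x) - gibbs.law (X v) x * ln (gibbs.law (X v) x)
        = gibbs.law (X v) x * ln (local_Z v x / gibbs.law (X v) x)"
      by (simp add: ln_div right_diff_distrib)
  qed
  finally show ?thesis .
qed

lemma odd_site_le:
  assumes v: "v \<in> odd_sites"
  shows "weighted_entropy (nbrs v) / (2 * real CARD('d))
           + (marginal_entropy (insert v (nbrs v)) - marginal_entropy (nbrs v)
              + gibbs.expect (\<lambda>f. ln (site_weight v f)))
         \<le> odd_site_bound v"
proof -
  have "weighted_entropy (nbrs v) / (2 * real CARD('d)) + gibbs.expect (\<lambda>f. ln (site_partition v f))
      = (weighted_entropy (nbrs v) + 2 * real CARD('d) * gibbs.expect (\<lambda>f. ln (site_partition v f)))
        / (2 * real CARD('d))"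
    by (simp add: add_divide_distrib)
  also have "\<dots> \<le> (\<Sum>x\<in>X v ` Om. gibbs.law (X v) x * ln (local_Z v x / gibbs.law (X v) x))
      / (2 * real CARD('d))"
    using weighted_entropy_nbrs_le[OF v] by (rule divide_right_mono) simp
  finally have "weighted_entropy (nbrs v) / (2 * real CARD('d)) + gibbs.expect (\<lambda>f. ln (site_partition v f))
      \<le> (\<Sum>x\<in>X v ` Om. gibbs.law (X v) x * ln (local_Z v x / gibbs.law (X v) x))
      / (2 * real CARD('d))" .
  then show ?thesis
    using entropy_site_given_nbrs_le[OF v] by (simp add: odd_site_bound_def sum_divide_distrib)
qed

lemma ln_Z_le:
  "ln Z \<le> (\<Sum>v\<in>odd_sites. odd_site_bound v)
         + (\<Sum>u\<in>inner_boundary S. boundary_degree u / (2 * real CARD('d)) * ln (lam_set lam (Su u)))"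
proof -
  have "(\<Sum>u\<in>inner_boundary S. boundary_degree u / (2 * real CARD('d)) * weighted_entropy {u})
      \<le> (\<Sum>u\<in>inner_boundary S. boundary_degree u / (2 * real CARD('d)) * ln (lam_set lam (Su u)))"
    using weighted_entropy_boundary_site by (intro sum_mono mult_left_mono) auto
  moreover have "(\<Sum>v\<in>odd_sites. weighted_entropy (nbrs v) / (2 * real CARD('d))
        + (marginal_entropy (insert v (nbrs v)) - marginal_entropy (nbrs v)
           + gibbs.expect (\<lambda>f. ln (site_weight v f))))
      \<le> (\<Sum>v\<in>odd_sites. odd_site_bound v)"
    using odd_site_le by (rule sum_mono)
  ultimately show ?thesis
    using ln_Z_eq marginal_entropy_S_le weighted_entropy_even_sites_le
    unfolding weighted_entropy_def sum.distrib by linarith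
qed

lemma lam_set_boundary_pos: "u \<in> inner_boundary S \<Longrightarrow> lam_set lam (Su u) > 0"
  unfolding lam_set_def using Om_nonempty F_boundary lam_pos unfolding Om_def
  by (fastforce intro: sum_pos2 less_imp_le)

lemma total_weight_le:
  "Z \<le> (\<Prod>v\<in>odd_sites.
          \<Prod>x\<in>supp_X lam lam2 S F (X v).
            (Zfun lam lam2 v (Psi_set lam lam2 S F (X v) v x) (I_set lam lam2 S F (X v) v x)
               / prob_X lam lam2 S F (X v) x)
            powr (prob_X lam lam2 S F (X v) x / (2 * real CARD('d))))
       * (\<Prod>u\<in>inner_boundary S. lam_set lam (Su u) powr (boundary_degree u / (2 * real CARD('d))))"
proof -
  have "(\<Prod>x\<in>X v ` Om. (local_Z v x / gibbs.law (X v) x) powr (gibbs.law (X v) x / (2 * real CARD('d))))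
      = exp (odd_site_bound v)"
    if "v \<in> odd_sites" for v
    unfolding odd_site_bound_def using local_Z_pos[OF that] gibbs.law_pos_iff[of "X v"]
    by (intro prod_powr_eq_exp_sum) simp
  moreover have "(\<Prod>u\<in>inner_boundary S. lam_set lam (Su u) powr (boundary_degree u / (2 * real CARD('d))))
      = exp (\<Sum>u\<in>inner_boundary S. boundary_degree u / (2 * real CARD('d)) * ln (lam_set lam (Su u)))"
    using lam_set_boundary_pos by (rule prod_powr_eq_exp_sum)
  ultimately have "(\<Prod>v\<in>odd_sites. \<Prod>x\<in>X v ` Om.
        (local_Z v x / gibbs.law (X v) x) powr (gibbs.law (X v) x / (2 * real CARD('d))))
      * (\<Prod>u\<in>inner_boundary S. lam_set lam (Su u) powr (boundary_degree u / (2 * real CARD('d))))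
      = exp ((\<Sum>v\<in>odd_sites. odd_site_bound v)
         + (\<Sum>u\<in>inner_boundary S. boundary_degree u / (2 * real CARD('d)) * ln (lam_set lam (Su u))))"
    using finite_S by (simp add: exp_add exp_sum)
  moreover have "Z \<le> exp ((\<Sum>v\<in>odd_sites. odd_site_bound v)
         + (\<Sum>u\<in>inner_boundary S. boundary_degree u / (2 * real CARD('d)) * ln (lam_set lam (Su u))))"
    using exp_le_cancel_iff[THEN iffD2, OF ln_Z_le] Z_pos by simp
  ultimately show ?thesis
    unfolding supp_X_eq_image prob_X_eq_law local_Z_def[symmetric] by simp
qed

end

theorem lemma7p3:
  fixes lam :: "'s::finite \<Rightarrow> real" and lam2 :: "'s \<Rightarrow> 's \<Rightarrow> real"
    and S :: "'d::finite vertex set"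
    and Su :: "'d vertex \<Rightarrow> 's set"
    and F :: "('d vertex \<Rightarrow> 's) set"
    and X :: "'d vertex \<Rightarrow> ('d vertex \<Rightarrow> 's) \<Rightarrow> 'x"
  assumes "spin_system lam lam2"
    and "finite S" and "even_set S"
    and "F \<subseteq> S \<rightarrow>\<^sub>E (UNIV :: 's set)"
    and "\<forall>f\<in>F. \<forall>u\<in>inner_boundary S. f u \<in> Su u"
    and "\<forall>v\<in>S. odd_vertex v \<longrightarrow>
           (\<forall>f g. (\<forall>u\<in>nbrs v. f u = g u) \<longrightarrow> X v f = X v g)"
  shows "total_weight lam lam2 S F \<le>
    (\<Prod>v\<in>{v\<in>S. odd_vertex v}.
       \<Prod>x\<in>supp_X lam lam2 S F (X v).
         (Zfun lam lam2 v (Psi_set lam lam2 S F (X v) v x) (I_set lam lam2 S F (X v) v x)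
            / prob_X lam lam2 S F (X v) x)
         powr (prob_X lam lam2 S F (X v) x / (2 * real CARD('d))))
    * (\<Prod>u\<in>inner_boundary S.
         lam_set lam (Su u) powr (real (card (incident_edges u \<inter> edge_boundary S)) / (2 * real CARD('d))))"
proof (cases "total_weight lam lam2 S F > 0")
  case True
  then interpret spin_gibbs lam lam2 S Su F X
    using assms by unfold_locales auto
  show ?thesis by (rule total_weight_le)
next
  case False
  then have "total_weight lam lam2 S F \<le> 0" by simp
  then show ?thesis by (rule order.trans) (intro mult_nonneg_nonneg prod_nonneg; simp)
qed

end
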